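(* Every half dual polar graph is geodesic-transitive.
   Context: Let $W$ be a $2\omega$-dimensional vector space over $\mathbb{F}_q$ with a non-degenerate quadratic form of plus type (Witt index $\omega\ge2$). The dual polar graph of $W$ has as vertices the totally singular $\omega$-subspaces, two adjacent iff they meet in dimension $\omega-1$; this graph is bipartite. A half dual polar graph is a halved graph of it: the graph on one of the two parts, two vertices adjacent iff they are at distance $2$ in the dual polar graph (equivalently, iff they meet in dimension $\omega-2$). A geodesic of length $\ell$ is a vertex sequence $(v_0,\dots,v_\ell)$ with consecutive vertices adjacent and $d(v_0,v_\ell)=\ell$; a graph is geodesic-transitive if its automorphism group is transitive on geodesics of each length. *)

theory Defs
  imports Complex_Main "HOL-Library.Function_Algebras"
begin

definition fscale :: "'a::field \<Rightarrow> ('n \<Rightarrow> 'a) \<Rightarrow> ('n \<Rightarrow> 'a)" where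
  "fscale c x = (\<lambda>i. c * x i)"

abbreviation fsubspace :: "('n \<Rightarrow> 'a::field) set \<Rightarrow> bool" where
  "fsubspace U \<equiv> module.subspace fscale U"

abbreviation fdim :: "('n \<Rightarrow> 'a::field) set \<Rightarrow> nat" where
  "fdim U \<equiv> vector_space.dim fscale U"

text \<open>A quadratic form on F^n, given by a coefficient matrix C: Q(x) = sum_{i,j} C i j x_i x_j.
  Every quadratic form arises this way.\<close>
definition qform :: "('n::finite \<Rightarrow> 'n \<Rightarrow> 'a::field) \<Rightarrow> ('n \<Rightarrow> 'a) \<Rightarrow> 'a" where
  "qform C x = (\<Sum>i\<in>UNIV. \<Sum>j\<in>UNIV. C i j * x i * x j)"

definition polar :: "('n::finite \<Rightarrow> 'n \<Rightarrow> 'a::field) \<Rightarrow> ('n \<Rightarrow> 'a) \<Rightarrow> ('n \<Rightarrow> 'a) \<Rightarrow> 'a" where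
  "polar C x y = qform C (x + y) - qform C x - qform C y"

definition nondegenerate :: "('n::finite \<Rightarrow> 'n \<Rightarrow> 'a::field) \<Rightarrow> bool" where
  "nondegenerate C \<longleftrightarrow> (\<forall>x. (\<forall>y. polar C x y = 0) \<longrightarrow> x = 0)"

definition totally_singular :: "('n::finite \<Rightarrow> 'n \<Rightarrow> 'a::field) \<Rightarrow> ('n \<Rightarrow> 'a) set \<Rightarrow> bool" where
  "totally_singular C U \<longleftrightarrow> fsubspace U \<and> (\<forall>x\<in>U. qform C x = 0)"

definition witt_index :: "('n::finite \<Rightarrow> 'n \<Rightarrow> 'a::field) \<Rightarrow> nat" where
  "witt_index C = Max {fdim U | U. totally_singular C U}"

definition dp_vertices :: "('n::finite \<Rightarrow> 'n \<Rightarrow> 'a::field) \<Rightarrow> nat \<Rightarrow> ('n \<Rightarrow> 'a) set set" where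
  "dp_vertices C w = {U. totally_singular C U \<and> fdim U = w}"

text \<open>The bipartite half of the dual polar graph containing U0: vertices at even
  distance from U0, i.e. with w - dim(U \<inter> U0) even.\<close>
definition half_vertices ::
  "('n::finite \<Rightarrow> 'n \<Rightarrow> 'a::field) \<Rightarrow> nat \<Rightarrow> ('n \<Rightarrow> 'a) set \<Rightarrow> ('n \<Rightarrow> 'a) set set" where
  "half_vertices C w U0 = {U \<in> dp_vertices C w. even (w - fdim (U \<inter> U0))}"

definition half_adj :: "nat \<Rightarrow> ('n \<Rightarrow> 'a::field) set \<Rightarrow> ('n \<Rightarrow> 'a) set \<Rightarrow> bool" where
  "half_adj w U U' \<longleftrightarrow> fdim (U \<inter> U') + 2 = w"

definition walk :: "'v set \<Rightarrow> ('v \<Rightarrow> 'v \<Rightarrow> bool) \<Rightarrow> 'v list \<Rightarrow> bool" where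
  "walk V E xs \<longleftrightarrow> xs \<noteq> [] \<and> set xs \<subseteq> V \<and>
     (\<forall>i. Suc i < length xs \<longrightarrow> E (xs ! i) (xs ! Suc i))"

definition gdist :: "'v set \<Rightarrow> ('v \<Rightarrow> 'v \<Rightarrow> bool) \<Rightarrow> 'v \<Rightarrow> 'v \<Rightarrow> nat" where
  "gdist V E u v = (LEAST n. \<exists>xs. walk V E xs \<and> hd xs = u \<and> last xs = v \<and> length xs = Suc n)"

definition geodesic :: "'v set \<Rightarrow> ('v \<Rightarrow> 'v \<Rightarrow> bool) \<Rightarrow> 'v list \<Rightarrow> bool" where
  "geodesic V E xs \<longleftrightarrow> walk V E xs \<and> gdist V E (hd xs) (last xs) = length xs - 1"

definition graph_aut :: "'v set \<Rightarrow> ('v \<Rightarrow> 'v \<Rightarrow> bool) \<Rightarrow> ('v \<Rightarrow> 'v) \<Rightarrow> bool" where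
  "graph_aut V E \<sigma> \<longleftrightarrow> bij_betw \<sigma> V V \<and> (\<forall>u\<in>V. \<forall>v\<in>V. E (\<sigma> u) (\<sigma> v) \<longleftrightarrow> E u v)"

definition geodesic_transitive :: "'v set \<Rightarrow> ('v \<Rightarrow> 'v \<Rightarrow> bool) \<Rightarrow> bool" where
  "geodesic_transitive V E \<longleftrightarrow>
     (\<forall>xs ys. geodesic V E xs \<and> geodesic V E ys \<and> length xs = length ys \<longrightarrow>
        (\<exists>\<sigma>. graph_aut V E \<sigma> \<and> map \<sigma> xs = ys))"

end

theory Submission
  imports Defs
begin

(* For maximal totally singular subspaces put d(U, V) = w - dim (U \<inter> V), the distance of the
   dual polar graph. In plus type d(U, V) + d(V, W) + d(U, W) is always even, so the half graph has
   adjacency d = 2 and distance d / 2. Inserting midpoints turns a geodesic of the half graph into one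
   of the dual polar graph, which extends to a geodesic X_0, ..., X_w of full length. Along it there
   is a hyperbolic basis e_i, f_i with X_k = <e_k, ..., e_(w-1), f_0, ..., f_(k-1)>. The linear map
   carrying the basis adapted to one geodesic to that adapted to another is an isometry of the form;
   it preserves d and hence induces an automorphism of the half graph moving one geodesic onto the
   other. *)

lemma sum_fun_apply: "(sum f A) x = (\<Sum>a\<in>A. f a x)"
  by (induction A rule: infinite_finite_induct) auto

lemma fscale_apply: "fscale c x i = c * x i"
  by (simp add: fscale_def)

definition unit_vec :: "'n \<Rightarrow> 'n \<Rightarrow> 'a::field" where
  "unit_vec i = (\<lambda>j. if j = i then 1 else 0)"

interpretation fv: vector_space "fscale :: 'a::field \<Rightarrow> ('n \<Rightarrow> 'a) \<Rightarrow> _"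
  by unfold_locales (auto simp: fscale_def fun_eq_iff algebra_simps)

lemma unit_vec_expansion: "x = (\<Sum>i\<in>UNIV. fscale (x i) (unit_vec i))"
  for x :: "'n::finite \<Rightarrow> 'a::field"
proof -
  have "(\<Sum>i\<in>UNIV. x i * (if j = i then 1 else 0)) = x j" for j
    by (simp add: if_distrib[of "(*) _"] cong: if_cong)
  then show ?thesis
    by (auto simp: fun_eq_iff sum_fun_apply unit_vec_def fscale_apply)
qed

interpretation fv: finite_dimensional_vector_space
  "fscale :: 'a::field \<Rightarrow> ('n::finite \<Rightarrow> 'a) \<Rightarrow> _" "range unit_vec"
proof
  show "finite (range (unit_vec :: 'n \<Rightarrow> 'n \<Rightarrow> 'a))" by simp
  have "x \<in> fv.span (range unit_vec)" for x :: "'n \<Rightarrow> 'a"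
    by (subst unit_vec_expansion) (intro fv.span_sum fv.span_scale fv.span_base rangeI)
  then show "fv.span (range (unit_vec :: 'n \<Rightarrow> 'n \<Rightarrow> 'a)) = UNIV" by auto
  show "fv.independent (range (unit_vec :: 'n \<Rightarrow> 'n \<Rightarrow> 'a))"
    unfolding fv.independent_explicit_module
  proof (intro allI impI)
    fix t u v
    assume t: "finite t" "t \<subseteq> range (unit_vec :: 'n \<Rightarrow> 'n \<Rightarrow> 'a)"
      and comb: "(\<Sum>v\<in>t. fscale (u v) v) = 0" and v: "v \<in> t"
    obtain i where vi: "v = unit_vec i" using t(2) v by auto
    have "0 = (\<Sum>x\<in>t. u x * x i)"
      using fun_cong[OF comb, of i] by (simp add: sum_fun_apply fscale_apply)
    also have "\<dots> = (\<Sum>x\<in>t. if x = v then u x else 0)"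
    proof (intro sum.cong refl)
      fix x assume "x \<in> t"
      then obtain k where k: "x = unit_vec k" using t(2) by auto
      then have "x = v \<longleftrightarrow> k = i" by (auto simp: vi unit_vec_def fun_eq_iff)
      then show "u x * x i = (if x = v then u x else 0)" by (auto simp: k unit_vec_def)
    qed
    finally show "u v = 0" using t(1) v by simp
  qed
qed

interpretation fvp: finite_dimensional_vector_space_pair_1
  "fscale :: 'a::field \<Rightarrow> ('n::finite \<Rightarrow> 'a) \<Rightarrow> _" "range unit_vec" "fscale :: 'a \<Rightarrow> ('n \<Rightarrow> 'a) \<Rightarrow> _"
  by unfold_locales

lemma card_range_unit_vec [simp]: "card (range (unit_vec :: 'n::finite \<Rightarrow> 'n \<Rightarrow> 'a::field)) = card (UNIV :: 'n set)"
proof -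
  have "inj (unit_vec :: 'n \<Rightarrow> 'n \<Rightarrow> 'a)" by (auto simp: inj_def unit_vec_def fun_eq_iff)
  then show ?thesis by (simp add: card_image)
qed

lemma fdim_UNIV: "fdim (UNIV :: ('n::finite \<Rightarrow> 'a::field) set) = card (UNIV :: 'n set)"
  by simp

lemma fdim_le_card_UNIV: "fdim (S :: ('n::finite \<Rightarrow> 'a::field) set) \<le> card (UNIV :: 'n set)"
  using fv.dim_subset[of S UNIV] by simp

lemma fdim_nonzero_imp_ex_nonzero:
  "fdim (S :: ('n::finite \<Rightarrow> 'a::field) set) \<noteq> 0 \<Longrightarrow> \<exists>x\<in>S. x \<noteq> 0"
  by (auto simp: fv.dim_eq_0)

lemma fdim_add_le_fdim_Int:
  fixes A B X :: "('n::finite \<Rightarrow> 'a::field) set"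
  assumes "fsubspace A" "fsubspace B" "fsubspace X" "A \<subseteq> X" "B \<subseteq> X"
  shows "fdim A + fdim B \<le> fdim X + fdim (A \<inter> B)"
proof -
  have "fdim {a + b |a b. a \<in> A \<and> b \<in> B} + fdim (A \<inter> B) = fdim A + fdim B"
    by (rule fv.dim_sums_Int[OF assms(1,2)])
  moreover have "{a + b |a b. a \<in> A \<and> b \<in> B} \<subseteq> X"
    using assms by (auto intro: fv.subspace_add)
  then have "fdim {a + b |a b. a \<in> A \<and> b \<in> B} \<le> fdim X" by (rule fv.dim_subset)
  ultimately show ?thesis by linarith
qed

lemma fdim_span_insert:
  fixes H :: "('n::finite \<Rightarrow> 'a::field) set"
  assumes "fsubspace H" "x \<notin> H"
  shows "fdim (fv.span (insert x H)) = fdim H + 1"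
proof -
  from assms(1) have "fv.span H = H" by (rule fv.span_eq_iff[THEN iffD2])
  with assms(2) have "x \<notin> fv.span H" by (simp only: not_False_eq_True)
  then show ?thesis by (simp add: fv.dim_insert)
qed

lemma span_insert_eq_if_fdim_Suc:
  fixes H U :: "('n::finite \<Rightarrow> 'a::field) set"
  assumes "fsubspace H" "fsubspace U" "H \<subseteq> U" "x \<in> U" "x \<notin> H" "fdim U = fdim H + 1"
  shows "fv.span (insert x H) = U"
proof (rule fv.subspace_dim_equal)
  show "fv.span (insert x H) \<subseteq> U" using assms(2-4) by (intro fv.span_minimal) auto
  show "fdim U \<le> fdim (fv.span (insert x H))" using fdim_span_insert[OF assms(1,5)] assms(6) by simp
qed (use assms(2) in simp_all)

lemma fdim_le_fdim_kernel_Suc: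
  fixes \<phi> :: "('n::finite \<Rightarrow> 'a::field) \<Rightarrow> 'a"
  assumes T: "fsubspace T"
    and add: "\<And>x y. \<phi> (x + y) = \<phi> x + \<phi> y" and scale: "\<And>c x. \<phi> (fscale c x) = c * \<phi> x"
  shows "fdim T \<le> fdim (T \<inter> {y. \<phi> y = 0}) + 1"
proof (cases "T \<subseteq> {y. \<phi> y = 0}")
  case True
  then show ?thesis by (simp add: Int_absorb2)
next
  case False
  then obtain v where v: "v \<in> T" "\<phi> v \<noteq> 0" by auto
  let ?K = "T \<inter> {y. \<phi> y = 0}"
  have "T \<subseteq> fv.span (insert v ?K)"
  proof
    fix t assume t: "t \<in> T"
    let ?c = "\<phi> t / \<phi> v"
    have "\<phi> (t - fscale ?c v) = \<phi> t - ?c * \<phi> v"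
      using add[of "t - fscale ?c v" "fscale ?c v"] scale[of ?c v] by (simp add: algebra_simps)
    also have "\<dots> = 0" using v by simp
    finally have "t - fscale ?c v \<in> ?K"
      using T t v by (simp add: fv.subspace_diff fv.subspace_scale)
    then have "(t - fscale ?c v) + fscale ?c v \<in> fv.span (insert v ?K)"
      by (intro fv.span_add fv.span_scale fv.span_base) auto
    then show "t \<in> fv.span (insert v ?K)" by (simp only: diff_add_cancel)
  qed
  then have "fdim T \<le> fdim (insert v ?K)" by (rule fv.dim_mono)
  also have "\<dots> \<le> fdim ?K + 1" by (simp add: fv.dim_insert)
  finally show ?thesis .
qed

lemma polar_expand: "polar C x y = (\<Sum>i\<in>UNIV. \<Sum>j\<in>UNIV. C i j * (x i * y j + y i * x j))"
  by (simp add: polar_def qform_def sum_subtractf[symmetric] algebra_simps)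

lemma polar_sym: "polar C x y = polar C y x"
  by (simp add: polar_def algebra_simps)

lemma polar_add_left: "polar C (x + y) z = polar C x z + polar C y z"
  by (simp add: polar_expand algebra_simps sum.distrib)

lemma polar_add_right: "polar C z (x + y) = polar C z x + polar C z y"
  by (simp add: polar_expand algebra_simps sum.distrib)

lemma polar_scale_left: "polar C (fscale c x) y = c * polar C x y"
  by (simp add: polar_expand algebra_simps sum_distrib_left fscale_apply)

lemma polar_scale_right: "polar C y (fscale c x) = c * polar C y x"
  by (simp add: polar_expand algebra_simps sum_distrib_left fscale_apply)

lemma polar_zero_left [simp]: "polar C 0 y = 0"
  by (simp add: polar_expand)

lemma polar_zero_right [simp]: "polar C y 0 = 0"
  by (simp add: polar_expand)

lemma polar_neg_right: "polar C y (- x) = - polar C y x"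
  by (simp add: polar_expand sum_negf[symmetric] algebra_simps)

lemma polar_diff_right: "polar C z (x - y) = polar C z x - polar C z y"
  using polar_add_right[of C z x "- y"] by (simp add: polar_neg_right)

lemma polar_sum_left: "polar C (sum f A) y = (\<Sum>a\<in>A. polar C (f a) y)"
proof (induction A rule: infinite_finite_induct)
  case (infinite A)
  then show ?case by (metis sum.infinite polar_zero_left)
next
  case empty
  show ?case by (metis sum.empty polar_zero_left)
next
  case (insert x F)
  then show ?case by (metis sum.insert polar_add_left)
qed

lemma qform_add: "qform C (x + y) = qform C x + qform C y + polar C x y"
  by (simp add: polar_def)

lemma qform_scale: "qform C (fscale c x) = c * c * qform C x"
  by (simp add: qform_def sum_distrib_left algebra_simps fscale_apply)

lemma qform_zero [simp]: "qform C 0 = 0"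
  by (simp add: qform_def)

lemma qform_diff: "qform C (x - y) = qform C x + qform C y - polar C x y"
  using qform_add[of C x "- y"] by (simp add: qform_def polar_neg_right)

lemma subspace_Int_polar_kernel: "fsubspace U \<Longrightarrow> fsubspace (U \<inter> {z. polar C y z = 0})"
  unfolding fv.subspace_def by (auto simp: polar_add_right polar_scale_right)

lemma fdim_Int_polar_kernel:
  assumes U: "fsubspace U" and y: "\<exists>u\<in>U. polar C y u \<noteq> 0"
  shows "fdim (U \<inter> {z. polar C y z = 0}) + 1 = fdim U"
proof -
  let ?H = "U \<inter> {z. polar C y z = 0}"
  have le: "fdim U \<le> fdim ?H + 1"
    by (rule fdim_le_fdim_kernel_Suc[OF U]) (auto simp: polar_add_right polar_scale_right)
  have "fsubspace ?H" by (rule subspace_Int_polar_kernel[OF U])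
  moreover have "?H \<noteq> U" using y by auto
  ultimately have "fdim ?H < fdim U"
    using fv.subspace_dim_equal[OF _ U] fv.dim_subset[of ?H U] by force
  with le show ?thesis by linarith
qed

definition perp :: "('n::finite \<Rightarrow> 'n \<Rightarrow> 'a::field) \<Rightarrow> ('n \<Rightarrow> 'a) set \<Rightarrow> ('n \<Rightarrow> 'a) set" where
  "perp C S = {y. \<forall>x\<in>S. polar C x y = 0}"

lemma perp_subspace: "fsubspace (perp C S)"
  unfolding fv.subspace_def perp_def by (auto simp: polar_add_right polar_scale_right)

lemma perp_antimono: "S \<subseteq> T \<Longrightarrow> perp C T \<subseteq> perp C S"
  by (auto simp: perp_def)

lemma perp_span: "perp C (fv.span S) = perp C S"
proof
  show "perp C (fv.span S) \<subseteq> perp C S" by (rule perp_antimono) (rule fv.span_superset)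
  show "perp C S \<subseteq> perp C (fv.span S)"
  proof
    fix y assume y: "y \<in> perp C S"
    have "fv.span S \<subseteq> {x. polar C x y = 0}"
    proof (rule fv.span_minimal)
      show "S \<subseteq> {x. polar C x y = 0}" using y by (auto simp: perp_def)
      show "fsubspace {x. polar C x y = 0}"
        by (auto simp: fv.subspace_def polar_add_left polar_scale_left)
    qed
    then show "y \<in> perp C (fv.span S)" by (auto simp: perp_def)
  qed
qed

lemma perp_Un: "perp C (S \<union> T) = perp C S \<inter> perp C T"
  by (auto simp: perp_def)

lemma perp_UNIV: "nondegenerate C \<Longrightarrow> perp C UNIV = {0}"
  by (auto simp: perp_def nondegenerate_def polar_sym)

lemma card_le_fdim_perp_finite:
  fixes C :: "'n::finite \<Rightarrow> 'n \<Rightarrow> 'a::field"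
  assumes "finite G"
  shows "card (UNIV :: 'n set) \<le> fdim (perp C G) + card G"
  using assms
proof (induction G rule: finite_induct)
  case empty
  have "perp C {} = UNIV" by (simp add: perp_def)
  then show ?case by simp
next
  case (insert x G)
  have "perp C (insert x G) = perp C G \<inter> {y. polar C x y = 0}"
    by (auto simp: perp_def)
  moreover have "fdim (perp C G) \<le> fdim (perp C G \<inter> {y. polar C x y = 0}) + 1"
    by (rule fdim_le_fdim_kernel_Suc[OF perp_subspace]) (auto simp: polar_add_right polar_scale_right)
  ultimately have "fdim (perp C G) \<le> fdim (perp C (insert x G)) + 1" by simp
  then show ?case using insert by simp
qed

lemma card_le_fdim_perp:
  fixes C :: "'n::finite \<Rightarrow> 'n \<Rightarrow> 'a::field"
  shows "card (UNIV :: 'n set) \<le> fdim (perp C S) + fdim S"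
proof -
  obtain B where B: "B \<subseteq> S" "fv.independent B" "S \<subseteq> fv.span B" "card B = fdim S"
    using fv.basis_exists[of S] by blast
  have "fv.span B = fv.span S"
    using B by (metis fv.span_eq fv.span_superset subset_trans)
  then have "perp C S = perp C B" by (metis perp_span)
  then show ?thesis
    using card_le_fdim_perp_finite[OF fv.finiteI_independent[OF B(2)], of C] B(4) by simp
qed

lemma perp_Int_ex_nonzero:
  fixes C :: "'n::finite \<Rightarrow> 'n \<Rightarrow> 'a::field"
  assumes F: "fsubspace F" and G: "fdim G < fdim F"
  shows "\<exists>v\<in>F \<inter> perp C G. v \<noteq> 0"
proof -
  have "card (UNIV :: 'n set) \<le> fdim (perp C G) + fdim G" by (rule card_le_fdim_perp)
  moreover have "fdim F + fdim (perp C G) \<le> fdim (UNIV :: ('n \<Rightarrow> 'a) set) + fdim (F \<inter> perp C G)"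
    using F by (intro fdim_add_le_fdim_Int) (auto simp: perp_subspace)
  ultimately have "fdim (F \<inter> perp C G) \<noteq> 0" using G fdim_UNIV[where 'n='n and 'a='a] by linarith
  then show ?thesis by (rule fdim_nonzero_imp_ex_nonzero)
qed

lemma fdim_perp:
  fixes C :: "'n::finite \<Rightarrow> 'n \<Rightarrow> 'a::field"
  assumes nd: "nondegenerate C" and S: "fsubspace S"
  shows "fdim (perp C S) + fdim S = card (UNIV :: 'n set)"
proof -
  obtain A where A: "finite A" "A \<subseteq> S" "fv.independent A" "fv.span A = S" "card A = fdim S"
    using fv.basis_subspace_exists[OF S] by blast
  obtain B where B: "A \<subseteq> B" "B \<subseteq> UNIV" "fv.independent B" "UNIV \<subseteq> fv.span B"
    by (rule fv.maximal_independent_subset_extend[OF subset_UNIV A(3)])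
  have "card B = card (UNIV :: 'n set)"
    using fv.basis_card_eq_dim[of B UNIV] B by simp
  moreover have "finite B" using B(3) fv.finiteI_independent by blast
  ultimately have card_D: "card (B - A) = card (UNIV :: 'n set) - fdim S"
    using A B by (simp add: card_Diff_subset finite_subset)
  have "perp C S \<inter> perp C (B - A) = perp C (fv.span B)"
    using perp_span[of C A] perp_span[of C B] A(4) B(1) by (simp add: Un_absorb1 flip: perp_Un)
  also have "fv.span B = UNIV" using B(4) by auto
  finally have "perp C S \<inter> perp C (B - A) = {0}"
    using perp_UNIV[OF nd] by simp
  then have "fdim (perp C S) + fdim (perp C (B - A)) \<le> fdim (UNIV :: ('n \<Rightarrow> 'a) set)"
    using fdim_add_le_fdim_Int[OF perp_subspace perp_subspace fv.subspace_UNIV, of C S C "B - A"]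
    by simp
  moreover have "card (UNIV :: 'n set) \<le> fdim (perp C (B - A)) + fdim (B - A)"
    by (rule card_le_fdim_perp)
  moreover have "fdim (B - A) \<le> card (B - A)"
    using \<open>finite B\<close> by (intro fv.dim_le_card') simp
  moreover have "card (UNIV :: 'n set) \<le> fdim (perp C S) + fdim S"
    by (rule card_le_fdim_perp)
  moreover have "fdim S \<le> card (UNIV :: 'n set)" by (rule fdim_le_card_UNIV)
  ultimately show ?thesis using card_D fdim_UNIV[where 'n='n and 'a='a] by linarith
qed

lemma totally_singular_polar_zero:
  assumes "totally_singular C S" "x \<in> S" "y \<in> S"
  shows "polar C x y = 0"
proof -
  have "x + y \<in> S" using assms by (simp add: totally_singular_def fv.subspace_add)
  then show ?thesis using assms by (simp add: totally_singular_def polar_def)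
qed

lemma totally_singular_subset_perp: "totally_singular C S \<Longrightarrow> S \<subseteq> perp C S"
  by (auto simp: perp_def intro: totally_singular_polar_zero)

lemma totally_singular_subspace:
  "totally_singular C U \<Longrightarrow> fsubspace H \<Longrightarrow> H \<subseteq> U \<Longrightarrow> totally_singular C H"
  by (auto simp: totally_singular_def)

lemma totally_singular_span_insert:
  assumes H: "totally_singular C H" and x: "qform C x = 0" "x \<in> perp C H"
  shows "totally_singular C (fv.span (insert x H))"
  unfolding totally_singular_def
proof (intro conjI ballI)
  show "fsubspace (fv.span (insert x H))" by simp
  fix z assume "z \<in> fv.span (insert x H)"
  then obtain k where "z - fscale k x \<in> fv.span H" using fv.span_breakdown_eq by blast
  moreover have "fv.span H = H" using H by (simp add: totally_singular_def)
  ultimately obtain h where h: "h \<in> H" "z = h + fscale k x" by (metis diff_add_cancel)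
  have "qform C z = qform C h + qform C (fscale k x) + polar C h (fscale k x)"
    by (simp add: h(2) qform_add)
  also have "\<dots> = 0"
    using H h(1) x by (simp add: totally_singular_def qform_scale polar_scale_right perp_def)
  finally show "qform C z = 0" .
qed

section \<open>The dual polar graph\<close>

locale quadratic_space =
  fixes C :: "'n::finite \<Rightarrow> 'n \<Rightarrow> 'a::field" and w :: nat
  assumes nondegenerate: "nondegenerate C" and card_UNIV: "card (UNIV :: 'n set) = 2 * w"
begin

abbreviation Q where "Q \<equiv> qform C"
abbreviation Bp where "Bp \<equiv> polar C"
abbreviation DP where "DP \<equiv> dp_vertices C w"

lemma fdim_perp_add: "fsubspace S \<Longrightarrow> fdim (perp C S) + fdim S = 2 * w"
  using fdim_perp[OF nondegenerate] card_UNIV by simp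

lemma dp_subspace: "U \<in> DP \<Longrightarrow> fsubspace U"
  by (simp add: dp_vertices_def totally_singular_def)

lemma dp_singular: "U \<in> DP \<Longrightarrow> x \<in> U \<Longrightarrow> Q x = 0"
  by (simp add: dp_vertices_def totally_singular_def)

lemma dp_fdim: "U \<in> DP \<Longrightarrow> fdim U = w"
  by (simp add: dp_vertices_def)

lemma dp_totally_singular: "U \<in> DP \<Longrightarrow> totally_singular C U"
  by (simp add: dp_vertices_def)

lemma dp_polar_zero: "U \<in> DP \<Longrightarrow> x \<in> U \<Longrightarrow> y \<in> U \<Longrightarrow> Bp x y = 0"
  using totally_singular_polar_zero dp_totally_singular by blast

lemma dp_perp: assumes U: "U \<in> DP" shows "perp C U = U"
proof -
  have "U \<subseteq> perp C U" using totally_singular_subset_perp dp_totally_singular U by blast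
  moreover have "fdim (perp C U) = w" using fdim_perp_add[OF dp_subspace[OF U]] dp_fdim[OF U] by simp
  ultimately have "U = perp C U"
    using fv.subspace_dim_equal[OF dp_subspace[OF U] perp_subspace, of C] dp_fdim[OF U] by simp
  then show ?thesis by simp
qed

lemma dp_not_perp: "U \<in> DP \<Longrightarrow> x \<notin> U \<Longrightarrow> \<exists>u\<in>U. Bp u x \<noteq> 0"
  using dp_perp[of U] by (auto simp: perp_def)

lemma dp_Int_subspace: "U \<in> DP \<Longrightarrow> V \<in> DP \<Longrightarrow> fsubspace (U \<inter> V)"
  by (intro fv.subspace_inter dp_subspace)

lemma dp_fdim_Int_le: "U \<in> DP \<Longrightarrow> fdim (U \<inter> V) \<le> w"
  using fv.dim_subset[of "U \<inter> V" U] dp_fdim by auto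

lemma dp_eq_if_subset:
  assumes "U \<in> DP" "V \<in> DP" "U \<subseteq> V"
  shows "U = V"
  using fv.subspace_dim_equal[OF dp_subspace[OF assms(1)] dp_subspace[OF assms(2)] assms(3)]
    dp_fdim assms(1,2) by simp

definition dp_dist where "dp_dist U V = w - fdim (U \<inter> V)"

lemma dp_dist_sym: "dp_dist U V = dp_dist V U"
  by (simp add: dp_dist_def Int_commute)

lemma dp_dist_le: "U \<in> DP \<Longrightarrow> dp_dist U V \<le> w"
  by (simp add: dp_dist_def)

lemma dp_dist_eq_0_iff: "U \<in> DP \<Longrightarrow> V \<in> DP \<Longrightarrow> dp_dist U V = 0 \<longleftrightarrow> U = V"
proof
  assume U: "U \<in> DP" and V: "V \<in> DP" and "dp_dist U V = 0"
  then have "fdim U \<le> fdim (U \<inter> V)" using dp_fdim by (simp add: dp_dist_def)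
  then have "U \<inter> V = U"
    using fv.subspace_dim_equal[OF dp_Int_subspace[OF U V] dp_subspace[OF U]] by blast
  then show "U = V" using dp_eq_if_subset[OF U V] by blast
qed (simp add: dp_dist_def dp_fdim)

lemma dp_dist_self [simp]: "U \<in> DP \<Longrightarrow> dp_dist U U = 0"
  using dp_dist_eq_0_iff by blast

lemma dp_fdim_Int_Int:
  assumes "U \<in> DP" "V \<in> DP" "W \<in> DP"
  shows "fdim (U \<inter> V) + fdim (V \<inter> W) \<le> w + fdim (U \<inter> V \<inter> W)"
proof -
  have "fdim (U \<inter> V) + fdim (V \<inter> W) \<le> fdim V + fdim ((U \<inter> V) \<inter> (V \<inter> W))"
    using assms by (intro fdim_add_le_fdim_Int dp_Int_subspace dp_subspace) auto
  moreover have "(U \<inter> V) \<inter> (V \<inter> W) = U \<inter> V \<inter> W" by blast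
  ultimately show ?thesis using dp_fdim[OF assms(2)] by simp
qed

lemma dp_dist_triangle:
  assumes "U \<in> DP" "V \<in> DP" "W \<in> DP"
  shows "dp_dist U W \<le> dp_dist U V + dp_dist V W"
proof -
  have "fdim (U \<inter> V \<inter> W) \<le> fdim (U \<inter> W)" by (rule fv.dim_subset) blast
  then show ?thesis
    using dp_fdim_Int_Int[OF assms] dp_fdim_Int_le[OF assms(1)] dp_fdim_Int_le[OF assms(2)]
    by (simp add: dp_dist_def)
qed

lemma dp_Int_subset_between:
  assumes U: "U \<in> DP" and V: "V \<in> DP" and W: "W \<in> DP"
    and between: "dp_dist U V + dp_dist V W \<le> dp_dist U W"
  shows "U \<inter> W \<subseteq> V"
proof -
  have "fdim (U \<inter> V) \<le> w" "fdim (V \<inter> W) \<le> w" "fdim (U \<inter> W) \<le> w"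
    using dp_fdim_Int_le U V by auto
  then have "w + fdim (U \<inter> W) \<le> fdim (U \<inter> V) + fdim (V \<inter> W)"
    using between unfolding dp_dist_def by linarith
  with dp_fdim_Int_Int[OF U V W] have "fdim (U \<inter> W) \<le> fdim (U \<inter> V \<inter> W)" by linarith
  moreover have "fsubspace (U \<inter> V \<inter> W)" "fsubspace (U \<inter> W)"
    using U V W by (auto intro: fv.subspace_inter dp_Int_subspace dp_subspace)
  ultimately have "U \<inter> V \<inter> W = U \<inter> W"
    by (intro fv.subspace_dim_equal) auto
  then show ?thesis by blast
qed


lemma dp_neighbour_through_hyperplane:
  assumes U: "U \<in> DP" and H: "fsubspace H" "H \<subseteq> U" "fdim H + 1 = w"
    and x: "Q x = 0" "x \<in> perp C H" "x \<notin> U"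
  defines "U' \<equiv> fv.span (insert x H)"
  shows "U' \<in> DP" "U \<inter> U' = H" "x \<in> U'"
proof -
  have "totally_singular C U'"
    unfolding U'_def
    by (rule totally_singular_span_insert[OF totally_singular_subspace[OF dp_totally_singular[OF U] H(1,2)] x(1,2)])
  moreover have "fdim U' = w" unfolding U'_def using fdim_span_insert[OF H(1)] x(3) H(2,3) by auto
  ultimately show U': "U' \<in> DP" by (simp add: dp_vertices_def)
  show xU': "x \<in> U'" unfolding U'_def by (simp add: fv.span_base)
  have HUU': "H \<subseteq> U \<inter> U'" unfolding U'_def using H(2) fv.span_superset by blast
  have "U \<inter> U' \<noteq> U'" using x(3) xU' by blast
  then have "fdim (U \<inter> U') < fdim U'"
    using fv.subspace_dim_equal[OF dp_Int_subspace[OF U U'] dp_subspace[OF U']]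
      fv.dim_subset[of "U \<inter> U'" U'] by force
  then have "fdim (U \<inter> U') \<le> fdim H" using H(3) dp_fdim[OF U'] by simp
  then show "U \<inter> U' = H"
    using fv.subspace_dim_equal[OF H(1) dp_Int_subspace[OF U U'] HUU'] by simp
qed

lemma dp_polar_hyperplane:
  assumes U: "U \<in> DP" and u: "u \<in> U" "Bp y u \<noteq> 0"
  shows "fsubspace (U \<inter> {z. Bp y z = 0})" "fdim (U \<inter> {z. Bp y z = 0}) + 1 = w"
proof -
  show "fsubspace (U \<inter> {z. Bp y z = 0})" by (rule subspace_Int_polar_kernel[OF dp_subspace[OF U]])
  have "fdim (U \<inter> {z. Bp y z = 0}) + 1 = fdim U"
    using u by (intro fdim_Int_polar_kernel dp_subspace U) auto
  then show "fdim (U \<inter> {z. Bp y z = 0}) + 1 = w" using dp_fdim[OF U] by simp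
qed

lemma dp_singular_vector_off_hyperplane:
  assumes U: "U \<in> DP" and H: "fsubspace H" "H \<subseteq> U" "fdim H + 1 = w"
  shows "\<exists>y. Q y = 0 \<and> y \<in> perp C H \<and> y \<notin> U"
proof -
  have "fdim (perp C H) = w + 1" using fdim_perp_add[OF H(1)] H(3) by linarith
  then have "\<not> perp C H \<subseteq> U" using fv.dim_subset[of "perp C H" U] dp_fdim[OF U] by auto
  then obtain z where z: "z \<in> perp C H" "z \<notin> U" by blast
  obtain v where v: "v \<in> U" "Bp v z \<noteq> 0" using dp_not_perp[OF U z(2)] by blast
  \<comment> \<open>correct \<open>z\<close> by a multiple of \<open>v \<in> U\<close>, which is orthogonal to \<open>H\<close> and singular\<close>
  define y where "y = z - fscale (Q z / Bp v z) v"
  have "Q y = Q z + Q (fscale (Q z / Bp v z) v) - Bp z (fscale (Q z / Bp v z) v)"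
    by (simp add: y_def qform_diff)
  also have "\<dots> = 0"
    using v dp_singular[OF U v(1)] by (simp add: qform_scale polar_scale_right polar_sym)
  finally have "Q y = 0" .
  moreover have "v \<in> perp C H" using dp_polar_zero[OF U _ v(1)] H(2) by (auto simp: perp_def)
  then have "y \<in> perp C H"
    unfolding y_def using z(1) perp_subspace[of C H] by (intro fv.subspace_diff fv.subspace_scale)
  moreover have "y \<notin> U"
  proof
    assume "y \<in> U"
    then have "y + fscale (Q z / Bp v z) v \<in> U"
      using v(1) dp_subspace[OF U] by (intro fv.subspace_add fv.subspace_scale)
    then show False using z(2) by (simp add: y_def)
  qed
  ultimately show ?thesis by blast
qed

lemma dp_exists_other_through_hyperplane:
  assumes "U \<in> DP" "fsubspace H" "H \<subseteq> U" "fdim H + 1 = w"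
  shows "\<exists>U'\<in>DP. U \<inter> U' = H"
  using dp_singular_vector_off_hyperplane[OF assms] dp_neighbour_through_hyperplane[OF assms] by blast

lemma dp_dist_step:
  assumes U: "U \<in> DP" and W: "W \<in> DP" and ne: "U \<noteq> W"
  shows "\<exists>U'\<in>DP. dp_dist U U' = 1 \<and> dp_dist U' W + 1 = dp_dist U W"
proof -
  have "\<not> W \<subseteq> U" using dp_eq_if_subset[OF W U] ne by auto
  then obtain x where x: "x \<in> W" "x \<notin> U" by auto
  obtain u where u: "u \<in> U" "Bp u x \<noteq> 0" using dp_not_perp[OF U x(2)] by auto
  then have xu: "Bp x u \<noteq> 0" by (simp add: polar_sym)
  define H where "H = U \<inter> {z. Bp x z = 0}"
  note H = dp_polar_hyperplane[OF U u(1) xu, folded H_def]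
  have HU: "H \<subseteq> U" by (auto simp: H_def)
  have xH: "x \<in> perp C H" by (auto simp: perp_def H_def polar_sym)
  \<comment> \<open>the neighbour of \<open>U\<close> through \<open>H\<close> containing \<open>x\<close> is one step closer to \<open>W\<close>\<close>
  define U' where "U' = fv.span (insert x H)"
  note U' = dp_neighbour_through_hyperplane[OF U H(1) HU H(2) dp_singular[OF W x(1)] xH x(2),
      folded U'_def]
  have d1: "dp_dist U U' = 1" using U'(2) H(2) by (simp add: dp_dist_def)
  have "U \<inter> W \<subseteq> H" using dp_polar_zero[OF W x(1)] by (auto simp: H_def)
  then have "insert x (U \<inter> W) \<subseteq> U' \<inter> W" using x(1) U'(2,3) by blast
  then have "fv.span (insert x (U \<inter> W)) \<subseteq> U' \<inter> W"
    by (intro fv.span_minimal dp_Int_subspace U'(1) W)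
  then have "fdim (fv.span (insert x (U \<inter> W))) \<le> fdim (U' \<inter> W)" by (rule fv.dim_subset)
  moreover have "fdim (fv.span (insert x (U \<inter> W))) = fdim (U \<inter> W) + 1"
    using x(2) by (intro fdim_span_insert dp_Int_subspace U W) blast
  ultimately have "dp_dist U' W + 1 \<le> dp_dist U W"
    using dp_fdim_Int_le[OF U'(1), of W] by (simp add: dp_dist_def)
  moreover have "dp_dist U W \<le> dp_dist U U' + dp_dist U' W"
    by (rule dp_dist_triangle[OF U U'(1) W])
  ultimately have "dp_dist U' W + 1 = dp_dist U W" using d1 by linarith
  with d1 U'(1) show ?thesis by blast
qed

lemma dp_adjacent_polar_nonzero:
  assumes U: "U \<in> DP" and U': "U' \<in> DP" and adj: "fdim (U \<inter> U') + 1 = w"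
    and u: "u \<in> U" "u \<notin> U'" and u': "u' \<in> U'" "u' \<notin> U"
  shows "Bp u u' \<noteq> 0"
proof
  assume orth: "Bp u u' = 0"
  have "fv.span (insert u (U \<inter> U')) = U"
    using u adj dp_fdim[OF U]
    by (intro span_insert_eq_if_fdim_Suc dp_Int_subspace dp_subspace U U') auto
  moreover have "u' \<in> perp C (insert u (U \<inter> U'))"
    using orth dp_polar_zero[OF U' _ u'(1)] by (auto simp: perp_def polar_sym)
  then have "u' \<in> perp C (fv.span (insert u (U \<inter> U')))" by (simp only: perp_span)
  ultimately have "u' \<in> perp C U" by simp
  with u' show False using dp_perp[OF U] by simp
qed

lemma dp_adjacent_sum_eq_perp:
  assumes U: "U \<in> DP" and U': "U' \<in> DP" and adj: "fdim (U \<inter> U') + 1 = w"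
  shows "{a + b |a b. a \<in> U \<and> b \<in> U'} = perp C (U \<inter> U')"
proof (rule fv.subspace_dim_equal)
  show "fsubspace {a + b |a b. a \<in> U \<and> b \<in> U'}"
    by (rule fv.subspace_sums[OF dp_subspace[OF U] dp_subspace[OF U']])
  show "{a + b |a b. a \<in> U \<and> b \<in> U'} \<subseteq> perp C (U \<inter> U')"
    using dp_polar_zero[OF U] dp_polar_zero[OF U'] by (auto simp: perp_def polar_add_right)
  have "fdim {a + b |a b. a \<in> U \<and> b \<in> U'} + fdim (U \<inter> U') = fdim U + fdim U'"
    by (rule fv.dim_sums_Int[OF dp_subspace[OF U] dp_subspace[OF U']])
  moreover have "fdim (perp C (U \<inter> U')) + fdim (U \<inter> U') = 2 * w"
    by (rule fdim_perp_add[OF dp_Int_subspace[OF U U']])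
  ultimately show "fdim (perp C (U \<inter> U')) \<le> fdim {a + b |a b. a \<in> U \<and> b \<in> U'}"
    using dp_fdim[OF U] dp_fdim[OF U'] by simp
qed (rule perp_subspace)

lemma dp_adjacent_singular_in_Un:
  assumes U: "U \<in> DP" and U': "U' \<in> DP" and adj: "fdim (U \<inter> U') + 1 = w"
    and x: "Q x = 0" "x \<in> perp C (U \<inter> U')"
  shows "x \<in> U \<union> U'"
proof -
  obtain a b where ab: "x = a + b" "a \<in> U" "b \<in> U'"
    using x(2) dp_adjacent_sum_eq_perp[OF U U' adj] by blast
  have "Bp a b = 0"
    using x(1) dp_singular[OF U ab(2)] dp_singular[OF U' ab(3)] by (simp add: ab(1) qform_add)
  then have "a \<in> U' \<or> b \<in> U" using dp_adjacent_polar_nonzero[OF U U' adj] ab by blast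
  then show ?thesis
  proof
    assume "a \<in> U'"
    then have "x \<in> U'" using ab fv.subspace_add[OF dp_subspace[OF U']] by simp
    then show ?thesis by simp
  next
    assume "b \<in> U"
    then have "x \<in> U" using ab fv.subspace_add[OF dp_subspace[OF U]] by simp
    then show ?thesis by simp
  qed
qed

lemma fdim_perp_Int_dp:
  assumes H: "fsubspace H" and W: "W \<in> DP"
  shows "fdim (perp C H \<inter> W) + fdim H = w + fdim (H \<inter> W)"
proof -
  have "perp C {a + b |a b. a \<in> H \<and> b \<in> W} = perp C H \<inter> perp C W"
    using fv.subspace_0[OF H] fv.subspace_0[OF dp_subspace[OF W]]
    by (auto simp: perp_def polar_add_left) (metis add.right_neutral add.left_neutral)+
  then have "fdim (perp C H \<inter> W) + fdim {a + b |a b. a \<in> H \<and> b \<in> W} = 2 * w"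
    using fdim_perp_add[OF fv.subspace_sums[OF H dp_subspace[OF W]]] dp_perp[OF W] by simp
  moreover have "fdim {a + b |a b. a \<in> H \<and> b \<in> W} + fdim (H \<inter> W) = fdim H + fdim W"
    by (rule fv.dim_sums_Int[OF H dp_subspace[OF W]])
  ultimately show ?thesis using dp_fdim[OF W] by linarith
qed

text \<open>Bipartiteness of the dual polar graph; here the plus type (\<open>dim = 2 * w\<close>) is essential.\<close>

lemma dp_adjacent_fdim_Int_ne:
  assumes U: "U \<in> DP" and U': "U' \<in> DP" and W: "W \<in> DP" and adj: "fdim (U \<inter> U') + 1 = w"
  shows "fdim (U \<inter> W) \<noteq> fdim (U' \<inter> W)"
proof
  assume eq: "fdim (U \<inter> W) = fdim (U' \<inter> W)"
  define H where "H = U \<inter> U'"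
  define K where "K = H \<inter> W"
  have sH: "fsubspace H" and sK: "fsubspace K"
    unfolding H_def K_def using U U' W by (auto intro: fv.subspace_inter dp_subspace)
  have KUW: "K \<subseteq> U \<inter> W" and KU'W: "K \<subseteq> U' \<inter> W" by (auto simp: K_def H_def)
  have "H \<subseteq> U" by (simp add: H_def)
  then have "fdim H + fdim (U \<inter> W) \<le> fdim U + fdim (H \<inter> (U \<inter> W))"
    using sH dp_Int_subspace[OF U W] dp_subspace[OF U] by (intro fdim_add_le_fdim_Int) auto
  moreover have "H \<inter> (U \<inter> W) = K" by (auto simp: H_def K_def)
  ultimately have "fdim (U \<inter> W) \<le> fdim K + 1" using adj dp_fdim[OF U] by (simp add: H_def)
  moreover have "fdim K \<le> fdim (U \<inter> W)" using KUW by (rule fv.dim_subset)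
  ultimately consider "fdim (U \<inter> W) = fdim K + 1" | "fdim (U \<inter> W) = fdim K" by linarith
  then show False
  proof cases
    case 1
    \<comment> \<open>\<open>U \<inter> W\<close> and \<open>U' \<inter> W\<close> contain vectors off \<open>H\<close>; they are orthogonal, being in \<open>W\<close>\<close>
    have "\<not> U \<inter> W \<subseteq> K" "\<not> U' \<inter> W \<subseteq> K"
      using 1 eq fv.dim_subset[of "U \<inter> W" K] fv.dim_subset[of "U' \<inter> W" K] by auto
    then obtain u u' where u: "u \<in> U" "u \<in> W" "u \<notin> U'" and u': "u' \<in> U'" "u' \<in> W" "u' \<notin> U"
      by (auto simp: K_def H_def)
    have "Bp u u' \<noteq> 0" by (rule dp_adjacent_polar_nonzero[OF U U' adj u(1,3) u'(1,3)])
    then show False using dp_polar_zero[OF W u(2) u'(2)] by simp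
  next
    case 2
    \<comment> \<open>then \<open>perp C H \<inter> W\<close> is a subspace of dimension \<open>fdim K + 1\<close> inside \<open>U \<union> U'\<close>\<close>
    have "U \<inter> W = K"
      by (rule fv.subspace_dim_equal[OF sK dp_Int_subspace[OF U W] KUW, symmetric]) (use 2 in simp)
    moreover have "U' \<inter> W = K"
      by (rule fv.subspace_dim_equal[OF sK dp_Int_subspace[OF U' W] KU'W, symmetric]) (use 2 eq in simp)
    moreover have "x \<in> U \<union> U'" if "x \<in> perp C H \<inter> W" for x
      using that dp_adjacent_singular_in_Un[OF U U' adj] dp_singular[OF W] by (simp add: H_def)
    ultimately have "perp C H \<inter> W \<subseteq> K" by blast
    then have "fdim (perp C H \<inter> W) \<le> fdim K" by (rule fv.dim_subset)
    then show False using fdim_perp_Int_dp[OF sH W] adj by (simp add: H_def K_def)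
  qed
qed

lemma dp_dist_adjacent:
  assumes U: "U \<in> DP" and U': "U' \<in> DP" and W: "W \<in> DP" and adj: "dp_dist U U' = 1"
  shows "dp_dist U W = dp_dist U' W + 1 \<or> dp_dist U' W = dp_dist U W + 1"
proof -
  have "fdim (U \<inter> U') + 1 = w" using adj dp_fdim_Int_le[OF U, of U'] by (simp add: dp_dist_def)
  then have "dp_dist U W \<noteq> dp_dist U' W"
    using dp_adjacent_fdim_Int_ne[OF U U' W] dp_fdim_Int_le[OF U, of W] dp_fdim_Int_le[OF U', of W]
    by (simp add: dp_dist_def)
  moreover have "dp_dist U W \<le> dp_dist U U' + dp_dist U' W" by (rule dp_dist_triangle[OF U U' W])
  moreover have "dp_dist U' W \<le> dp_dist U' U + dp_dist U W" by (rule dp_dist_triangle[OF U' U W])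
  ultimately show ?thesis using adj dp_dist_sym[of U' U] by linarith
qed

lemma dp_dist_parity:
  assumes "U \<in> DP" "V \<in> DP" "W \<in> DP"
  shows "even (dp_dist U V + dp_dist V W + dp_dist U W)"
  using assms
proof (induction "dp_dist U V" arbitrary: U)
  case 0
  then show ?case using dp_dist_eq_0_iff by simp
next
  case (Suc k)
  then obtain U1 where U1: "U1 \<in> DP" "dp_dist U U1 = 1" "dp_dist U1 V + 1 = dp_dist U V"
    using dp_dist_step[OF Suc.prems(1,2)] by fastforce
  have "even (dp_dist U1 V + dp_dist V W + dp_dist U1 W)"
    using Suc U1 by simp
  moreover have "dp_dist U W = dp_dist U1 W + 1 \<or> dp_dist U1 W = dp_dist U W + 1"
    by (rule dp_dist_adjacent[OF Suc.prems(1) U1(1) Suc.prems(3) U1(2)])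
  ultimately show ?case using U1(3) by presburger
qed

lemma dp_dist_extend:
  assumes X0: "X0 \<in> DP" and X: "X \<in> DP" and lt: "dp_dist X0 X < w"
  shows "\<exists>X'\<in>DP. dp_dist X X' = 1 \<and> dp_dist X0 X' = dp_dist X0 X + 1"
proof -
  have "fdim (X0 \<inter> X) \<noteq> 0" using lt unfolding dp_dist_def by linarith
  then obtain a where a: "a \<in> X0 \<inter> X" "a \<noteq> 0" using fdim_nonzero_imp_ex_nonzero by blast
  then obtain y where "Bp a y \<noteq> 0" using nondegenerate by (auto simp: nondegenerate_def)
  then have y: "Bp y a \<noteq> 0" by (simp add: polar_sym)
  \<comment> \<open>leave \<open>X\<close> through a hyperplane missing \<open>a \<in> X0 \<inter> X\<close>\<close>
  define H where "H = X \<inter> {z. Bp y z = 0}"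
  note H = dp_polar_hyperplane[OF X IntD2[OF a(1)] y, folded H_def]
  have HX: "H \<subseteq> X" and aH: "a \<notin> H" using y by (auto simp: H_def)
  obtain X' where X': "X' \<in> DP" "X \<inter> X' = H"
    using dp_exists_other_through_hyperplane[OF X H(1) HX H(2)] a(1) by blast
  have d1: "dp_dist X X' = 1" using X'(2) H(2) by (simp add: dp_dist_def)
  have "dp_dist X X0 \<noteq> dp_dist X' X0 + 1"
  proof
    assume "dp_dist X X0 = dp_dist X' X0 + 1"
    then have "X0 \<inter> X \<subseteq> X'"
      using d1 by (intro dp_Int_subset_between[OF X0 X'(1) X]) (simp add: dp_dist_sym)
    then show False using a(1) aH X'(2) by blast
  qed
  then have "dp_dist X' X0 = dp_dist X X0 + 1"
    using dp_dist_adjacent[OF X X'(1) X0 d1] by simp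
  then have "dp_dist X0 X' = dp_dist X0 X + 1" by (simp add: dp_dist_sym)
  with d1 X'(1) show ?thesis by blast
qed

definition dp_geodesic :: "(nat \<Rightarrow> ('n \<Rightarrow> 'a) set) \<Rightarrow> nat \<Rightarrow> bool" where
  "dp_geodesic X m \<longleftrightarrow>
     (\<forall>j\<le>m. X j \<in> DP) \<and> (\<forall>i j. i \<le> j \<longrightarrow> j \<le> m \<longrightarrow> dp_dist (X i) (X j) = j - i)"

lemma dp_geodesic_in_DP: "dp_geodesic X m \<Longrightarrow> j \<le> m \<Longrightarrow> X j \<in> DP"
  by (simp add: dp_geodesic_def)

lemma dp_geodesic_dist: "dp_geodesic X m \<Longrightarrow> i \<le> j \<Longrightarrow> j \<le> m \<Longrightarrow> dp_dist (X i) (X j) = j - i"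
  by (simp add: dp_geodesic_def)

lemma dp_geodesic_fdim_Int:
  assumes X: "dp_geodesic X m" and ij: "i \<le> j" "j \<le> m"
  shows "fdim (X i \<inter> X j) = w - (j - i)" "j - i \<le> w"
proof -
  have Xi: "X i \<in> DP" using dp_geodesic_in_DP[OF X] ij by simp
  have d: "dp_dist (X i) (X j) = j - i" by (rule dp_geodesic_dist[OF X ij])
  show "j - i \<le> w" using dp_dist_le[OF Xi, of "X j"] d by simp
  show "fdim (X i \<inter> X j) = w - (j - i)"
    using dp_fdim_Int_le[OF Xi, of "X j"] d unfolding dp_dist_def by linarith
qed

lemma dp_geodesic_convex:
  assumes X: "dp_geodesic X m" and ijk: "i \<le> j" "j \<le> k" "k \<le> m"
  shows "X i \<inter> X k \<subseteq> X j"
proof (rule dp_Int_subset_between)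
  show "X i \<in> DP" "X j \<in> DP" "X k \<in> DP" using dp_geodesic_in_DP[OF X] ijk by auto
  show "dp_dist (X i) (X j) + dp_dist (X j) (X k) \<le> dp_dist (X i) (X k)"
    using dp_geodesic_dist[OF X] ijk by simp
qed

lemma dp_dist_path_le:
  assumes DP: "\<forall>j\<le>m. X j \<in> DP" and step: "\<forall>j<m. dp_dist (X j) (X (Suc j)) \<le> 1"
  shows "i + d \<le> m \<Longrightarrow> dp_dist (X i) (X (i + d)) \<le> d"
proof (induction d)
  case (Suc d)
  have "dp_dist (X i) (X (Suc (i + d))) \<le> dp_dist (X i) (X (i + d)) + dp_dist (X (i + d)) (X (Suc (i + d)))"
    using DP Suc.prems by (intro dp_dist_triangle) auto
  moreover have "dp_dist (X (i + d)) (X (Suc (i + d))) \<le> 1" using step Suc.prems by simp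
  moreover have "dp_dist (X i) (X (i + d)) \<le> d" using Suc by simp
  ultimately show ?case by simp
qed (use DP in simp)

lemma dp_geodesicI:
  assumes DP: "\<forall>j\<le>m. X j \<in> DP" and step: "\<forall>j<m. dp_dist (X j) (X (Suc j)) \<le> 1"
    and far: "m \<le> dp_dist (X 0) (X m)"
  shows "dp_geodesic X m"
  unfolding dp_geodesic_def
proof (intro conjI allI impI)
  fix i j assume ij: "i \<le> j" "j \<le> m"
  have le: "dp_dist (X a) (X b) \<le> b - a" if "a \<le> b" "b \<le> m" for a b
    using dp_dist_path_le[OF DP step, of a "b - a"] that by simp
  have "dp_dist (X 0) (X m) \<le> dp_dist (X 0) (X i) + dp_dist (X i) (X m)"
    using DP ij by (intro dp_dist_triangle) auto
  moreover have "dp_dist (X i) (X m) \<le> dp_dist (X i) (X j) + dp_dist (X j) (X m)"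
    using DP ij by (intro dp_dist_triangle) auto
  ultimately show "dp_dist (X i) (X j) = j - i" using far ij le[of 0 i] le[of i j] le[of j m] by linarith
qed (use DP in simp)

lemma dp_geodesic_extend:
  assumes "dp_geodesic X m" "m \<le> w"
  shows "\<exists>Y. dp_geodesic Y w \<and> (\<forall>j\<le>m. Y j = X j)"
  using assms
proof (induction "w - m" arbitrary: X m)
  case 0
  then have "m = w" by simp
  with 0 show ?case by blast
next
  case (Suc k)
  have m: "m < w" using Suc.hyps(2) by simp
  have X0: "X 0 \<in> DP" and Xm: "X m \<in> DP" using dp_geodesic_in_DP[OF Suc.prems(1)] by auto
  have d: "dp_dist (X 0) (X m) = m" using dp_geodesic_dist[OF Suc.prems(1), of 0 m] by simp
  obtain X' where X': "X' \<in> DP" "dp_dist (X m) X' = 1" "dp_dist (X 0) X' = m + 1"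
    using dp_dist_extend[OF X0 Xm] d m by auto
  have "dp_geodesic (X(Suc m := X')) (Suc m)"
  proof (rule dp_geodesicI)
    show "\<forall>j\<le>Suc m. (X(Suc m := X')) j \<in> DP"
      using dp_geodesic_in_DP[OF Suc.prems(1)] X'(1) by (auto simp: le_Suc_eq)
    show "\<forall>j<Suc m. dp_dist ((X(Suc m := X')) j) ((X(Suc m := X')) (Suc j)) \<le> 1"
      using dp_geodesic_dist[OF Suc.prems(1)] X'(2) by (auto simp: less_Suc_eq)
  qed (use X'(3) in simp)
  moreover have "k = w - Suc m" using Suc.hyps(2) by simp
  ultimately have "\<exists>Y. dp_geodesic Y w \<and> (\<forall>j\<le>Suc m. Y j = (X(Suc m := X')) j)"
    using Suc.hyps(1) Suc_leI[OF m] by blast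
  then show ?case by auto
qed

section \<open>Hyperbolic bases\<close>

definition hyperbolic_pairs :: "(nat \<Rightarrow> 'n \<Rightarrow> 'a) \<Rightarrow> (nat \<Rightarrow> 'n \<Rightarrow> 'a) \<Rightarrow> bool" where
  "hyperbolic_pairs e f \<longleftrightarrow> (\<forall>i<w. Q (e i) = 0 \<and> Q (f i) = 0) \<and>
     (\<forall>i<w. \<forall>j<w. Bp (e i) (e j) = 0 \<and> Bp (f i) (f j) = 0 \<and> Bp (e i) (f j) = (if i = j then 1 else 0))"

lemma hyperbolic_pairsD:
  assumes "hyperbolic_pairs e f" "i < w" "j < w"
  shows "Q (e i) = 0" "Q (f i) = 0" "Bp (e i) (e j) = 0" "Bp (f i) (f j) = 0"
    "Bp (e i) (f j) = (if i = j then 1 else 0)" "Bp (f j) (e i) = (if i = j then 1 else 0)"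
  using assms by (auto simp: hyperbolic_pairs_def polar_sym[of C "f j"])

lemma hyperbolic_pairs_inj:
  assumes h: "hyperbolic_pairs e f" and i: "i < w" and j: "j < w"
  shows "e i = e j \<longleftrightarrow> i = j" "f i = f j \<longleftrightarrow> i = j" "e i \<noteq> f j"
  using hyperbolic_pairsD(5)[OF h i i] hyperbolic_pairsD(5)[OF h j i] hyperbolic_pairsD(5)[OF h i j]
    hyperbolic_pairsD(4)[OF h j i]
  by (auto split: if_splits)

lemma hyperbolic_pairs_dual:
  assumes h: "hyperbolic_pairs e f" and i: "i < w" and x: "x \<in> e ` {..<w} \<union> f ` {..<w}"
  shows "Bp x (f i) = (if x = e i then 1 else 0)" "Bp x (e i) = (if x = f i then 1 else 0)"
proof -
  from x obtain j where j: "j < w" "x = e j \<or> x = f j" by blast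
  note facts = j hyperbolic_pairsD(3-6)[OF h j(1) i] hyperbolic_pairsD(6)[OF h i j(1)]
    hyperbolic_pairs_inj[OF h j(1) i] hyperbolic_pairs_inj(3)[OF h i j(1)]
  show "Bp x (f i) = (if x = e i then 1 else 0)" using facts by auto
  show "Bp x (e i) = (if x = f i then 1 else 0)" using facts by auto
qed

lemma hyperbolic_pairs_independent:
  assumes h: "hyperbolic_pairs e f" and A: "A \<subseteq> {..<w}" and B: "B \<subseteq> {..<w}"
  shows "fv.independent (e ` A \<union> f ` B)"
  unfolding fv.independent_explicit_module
proof (intro allI impI)
  fix t u v
  assume t: "finite t" "t \<subseteq> e ` A \<union> f ` B" and comb: "(\<Sum>v\<in>t. fscale (u v) v) = 0" and v: "v \<in> t"
  then have t_sub: "t \<subseteq> e ` {..<w} \<union> f ` {..<w}" using A B by blast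
  obtain v' where v': "\<And>x. x \<in> t \<Longrightarrow> Bp x v' = (if x = v then 1 else 0)"
  proof (cases "v \<in> e ` A")
    case True
    then obtain i where "i \<in> A" "v = e i" by blast
    then show ?thesis using that[of "f i"] hyperbolic_pairs_dual(1)[OF h] A t_sub by blast
  next
    case False
    then obtain i where "i \<in> B" "v = f i" using t v by blast
    then show ?thesis using that[of "e i"] hyperbolic_pairs_dual(2)[OF h] B t_sub by blast
  qed
  have "0 = (\<Sum>x\<in>t. u x * Bp x v')"
    using arg_cong[OF comb, of "\<lambda>x. Bp x v'"] by (simp add: polar_sum_left polar_scale_left)
  also have "\<dots> = (\<Sum>x\<in>t. if x = v then u x else 0)"
    using v' by (intro sum.cong) auto
  finally show "u v = 0" using t(1) v by simp
qed

lemma hyperbolic_pairs_fdim_span: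
  assumes h: "hyperbolic_pairs e f" and A: "A \<subseteq> {..<w}" and B: "B \<subseteq> {..<w}"
  shows "fdim (fv.span (e ` A \<union> f ` B)) = card A + card B"
proof -
  have "inj_on e A" "inj_on f B" "e ` A \<inter> f ` B = {}"
    using hyperbolic_pairs_inj[OF h] A B by (auto simp: inj_on_def subset_iff)
  moreover have "finite A" "finite B" using A B finite_subset by auto
  ultimately have "card (e ` A \<union> f ` B) = card A + card B"
    by (simp add: card_Un_disjoint card_image)
  then show ?thesis
    using fv.dim_span_eq_card_independent[OF hyperbolic_pairs_independent[OF h A B]] by simp
qed

end

lemma flag_adapted_basis:
  fixes E :: "nat \<Rightarrow> ('n::finite \<Rightarrow> 'a::field) set"
  assumes sub: "\<And>k. k \<le> m \<Longrightarrow> fsubspace (E k)"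
    and mono: "\<And>j k. j \<le> k \<Longrightarrow> k \<le> m \<Longrightarrow> E k \<subseteq> E j"
    and dim: "\<And>k. k \<le> m \<Longrightarrow> fdim (E k) = m - k"
  shows "\<exists>e. \<forall>k\<le>m. E k = fv.span (e ` {k..<m})"
proof -
  have "\<forall>k. \<exists>v. k < m \<longrightarrow> v \<in> E k \<and> v \<notin> E (Suc k)"
  proof
    fix k
    show "\<exists>v. k < m \<longrightarrow> v \<in> E k \<and> v \<notin> E (Suc k)"
    proof (cases "k < m")
      case True
      then have "\<not> E k \<subseteq> E (Suc k)" using fv.dim_subset[of "E k" "E (Suc k)"] dim[of k] dim[of "Suc k"] by auto
      then show ?thesis by blast
    qed simp
  qed
  then obtain e where e: "\<And>k. k < m \<Longrightarrow> e k \<in> E k \<and> e k \<notin> E (Suc k)" by metis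
  have span: "E (m - n) = fv.span (e ` {m - n..<m})" if "n \<le> m" for n
    using that
  proof (induction n)
    case 0
    have "E m \<subseteq> {0}" using dim[of m] fv.dim_eq_0[of "E m"] by simp
    then have "E m = {0}" using fv.subspace_0[OF sub[of m]] by blast
    then show ?case by simp
  next
    case (Suc n)
    define k where "k = m - Suc n"
    have k: "k < m" "Suc k = m - n" using Suc.prems by (auto simp: k_def)
    have ivl: "{k..<m} = insert k {Suc k..<m}" using k(1) by auto
    have "E k = fv.span (insert (e k) (E (Suc k)))"
      using e[OF k(1)] sub mono dim k by (intro span_insert_eq_if_fdim_Suc[symmetric]) auto
    also have "\<dots> = fv.span (insert (e k) (e ` {Suc k..<m}))"
      using Suc k by (simp only: fv.span_insert fv.span_span)
    also have "\<dots> = fv.span (e ` {k..<m})" using ivl by simp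
    finally show ?case by (simp add: k_def)
  qed
  have "E k = fv.span (e ` {k..<m})" if "k \<le> m" for k
    using span[of "m - k"] that by simp
  then show ?thesis by blast
qed

context quadratic_space
begin

lemma dp_geodesic_dual_vector:
  assumes X: "dp_geodesic X w" and k: "k < w"
    and e: "\<And>i j. i < w \<Longrightarrow> j \<le> i \<Longrightarrow> e i \<in> X j" and X0: "X 0 = fv.span (e ` {..<w})"
  shows "\<exists>v\<in>X (Suc k) \<inter> X w. \<forall>i<w. Bp (e i) v = (if i = k then 1 else 0)"
proof -
  have XDP: "X j \<in> DP" if "j \<le> w" for j using dp_geodesic_in_DP[OF X that] .
  define P where "P = perp C (e ` {..<k})"
  have "fdim (e ` {..<k}) \<le> k"
    using fv.dim_le_card'[of "e ` {..<k}"] card_image_le[of "{..<k}" e] by simp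
  moreover have "fdim (X (Suc k) \<inter> X w) = Suc k" using dp_geodesic_fdim_Int[OF X, of "Suc k" w] k by simp
  ultimately obtain v where v: "v \<in> X (Suc k)" "v \<in> X w" "v \<in> P" "v \<noteq> 0"
    using perp_Int_ex_nonzero[of "X (Suc k) \<inter> X w" "e ` {..<k}" C] XDP k
    by (auto simp: P_def dp_Int_subspace)
  have orth: "Bp (e i) v = 0" if "i < w" "i \<noteq> k" for i
  proof (cases "i < k")
    case True
    then show ?thesis using v(3) by (auto simp: P_def perp_def)
  next
    case False
    then have "e i \<in> X (Suc k)" using that e by simp
    moreover have "X (Suc k) \<in> DP" using XDP k by simp
    ultimately show ?thesis using dp_polar_zero v(1) by blast
  qed
  \<comment> \<open>otherwise \<open>v\<close> would be orthogonal to \<open>X 0\<close>, hence lie in \<open>X 0 \<inter> X w = 0\<close>\<close>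
  have nz: "Bp (e k) v \<noteq> 0"
  proof
    assume "Bp (e k) v = 0"
    then have "Bp (e i) v = 0" if "i < w" for i using orth[OF that] by (cases "i = k") auto
    then have "v \<in> perp C (e ` {..<w})" by (auto simp: perp_def)
    then have "v \<in> perp C (X 0)" unfolding X0 perp_span .
    then have "v \<in> X 0 \<inter> X w" using dp_perp[OF XDP[OF le0]] v(2) by simp
    moreover have "fdim (X 0 \<inter> X w) = 0" using dp_geodesic_fdim_Int[OF X, of 0 w] by simp
    then have "X 0 \<inter> X w \<subseteq> {0}" by (simp add: fv.dim_eq_0)
    ultimately show False using v(4) by blast
  qed
  define v' where "v' = fscale (1 / Bp (e k) v) v"
  have "fsubspace (X (Suc k))" "fsubspace (X w)" using XDP k dp_subspace by auto
  then have "v' \<in> X (Suc k) \<inter> X w" using v(1,2) by (simp add: v'_def fv.subspace_scale)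
  moreover have "Bp (e i) v' = (if i = k then 1 else 0)" if "i < w" for i
    using orth[OF that] nz by (simp add: v'_def polar_scale_right)
  ultimately show ?thesis by blast
qed

lemma dp_geodesic_span_hyperbolic_pairs:
  assumes X: "dp_geodesic X w" and h: "hyperbolic_pairs e f"
    and e: "\<And>i j. i < w \<Longrightarrow> j \<le> i \<Longrightarrow> e i \<in> X j"
    and f: "\<And>i. i < w \<Longrightarrow> f i \<in> X (Suc i) \<inter> X w" and k: "k \<le> w"
  shows "X k = fv.span (e ` {k..<w} \<union> f ` {..<k})"
proof (rule fv.subspace_dim_equal[symmetric])
  have Xk: "X k \<in> DP" by (rule dp_geodesic_in_DP[OF X k])
  have "f i \<in> X k" if "i < k" for i
    using f[of i] dp_geodesic_convex[OF X, of "Suc i" k w] that k by auto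
  then show "fv.span (e ` {k..<w} \<union> f ` {..<k}) \<subseteq> X k"
    using e k by (intro fv.span_minimal dp_subspace Xk) auto
  have "{k..<w} \<subseteq> {..<w}" "{..<k} \<subseteq> {..<w}" using k by auto
  then show "fdim (X k) \<le> fdim (fv.span (e ` {k..<w} \<union> f ` {..<k}))"
    using hyperbolic_pairs_fdim_span[OF h] dp_fdim[OF Xk] k by simp
  show "fsubspace (X k)" by (rule dp_subspace[OF Xk])
qed simp

lemma dp_geodesic_hyperbolic_basis:
  assumes X: "dp_geodesic X w"
  shows "\<exists>e f. hyperbolic_pairs e f \<and> (\<forall>k\<le>w. X k = fv.span (e ` {k..<w} \<union> f ` {..<k}))"
proof -
  have XDP: "X j \<in> DP" if "j \<le> w" for j using dp_geodesic_in_DP[OF X that] .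
  obtain e where e: "\<forall>k\<le>w. X 0 \<inter> X k = fv.span (e ` {k..<w})"
  proof (rule exE[OF flag_adapted_basis[of w "\<lambda>k. X 0 \<inter> X k"]])
    show "fsubspace (X 0 \<inter> X k)" if "k \<le> w" for k using that XDP by (intro dp_Int_subspace) auto
    show "X 0 \<inter> X k \<subseteq> X 0 \<inter> X j" if "j \<le> k" "k \<le> w" for j k
      using dp_geodesic_convex[OF X, of 0 j k] that by blast
    show "fdim (X 0 \<inter> X k) = w - k" if "k \<le> w" for k
      using dp_geodesic_fdim_Int[OF X, of 0 k] that by simp
  qed
  have eX: "e i \<in> X j" if "i < w" "j \<le> i" for i j
  proof -
    have "e i \<in> X 0 \<inter> X i" using e that fv.span_base[of "e i" "e ` {i..<w}"] by auto
    then show ?thesis using dp_geodesic_convex[OF X, of 0 j i] that by auto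
  qed
  have X0: "X 0 = fv.span (e ` {..<w})" using e[rule_format, of 0] by (simp add: atLeast0LessThan)
  have "\<forall>k. \<exists>v. k < w \<longrightarrow> v \<in> X (Suc k) \<inter> X w \<and> (\<forall>i<w. Bp (e i) v = (if i = k then 1 else 0))"
    using dp_geodesic_dual_vector[OF X _ eX X0] by blast
  then obtain f where f: "\<And>k. k < w \<Longrightarrow> f k \<in> X (Suc k) \<inter> X w \<and> (\<forall>i<w. Bp (e i) (f k) = (if i = k then 1 else 0))"
    by metis
  have h: "hyperbolic_pairs e f"
    unfolding hyperbolic_pairs_def
  proof (intro conjI allI impI)
    have X0w: "X 0 \<in> DP" "X w \<in> DP" using XDP by auto
    fix i j assume i: "i < w" and j: "j < w"
    show "Q (e i) = 0" using dp_singular[OF X0w(1) eX[OF i le0]] .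
    show "Q (f i) = 0" using dp_singular[OF X0w(2)] f[OF i] by simp
    show "Bp (e i) (e j) = 0" using dp_polar_zero[OF X0w(1) eX[OF i le0] eX[OF j le0]] .
    show "Bp (f i) (f j) = 0" using dp_polar_zero[OF X0w(2)] f[OF i] f[OF j] by simp
    show "Bp (e i) (f j) = (if i = j then 1 else 0)" using f[OF j] i by simp
  qed
  have "X k = fv.span (e ` {k..<w} \<union> f ` {..<k})" if "k \<le> w" for k
    using dp_geodesic_span_hyperbolic_pairs[OF X h eX _ that] f by blast
  with h show ?thesis by blast
qed
end

section \<open>Isometries\<close>

definition isometry :: "('n::finite \<Rightarrow> 'n \<Rightarrow> 'a::field) \<Rightarrow> (('n \<Rightarrow> 'a) \<Rightarrow> ('n \<Rightarrow> 'a)) \<Rightarrow> bool" where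
  "isometry C g \<longleftrightarrow> Vector_Spaces.linear fscale fscale g \<and> inj g \<and> (\<forall>x. qform C (g x) = qform C x)"

lemma isometry_surj: "isometry C g \<Longrightarrow> surj g"
  by (simp add: isometry_def fv.linear_inj_imp_surj)

lemma isometry_inv:
  assumes g: "isometry C g"
  shows "isometry C (inv g)"
  unfolding isometry_def
proof (intro conjI allI)
  show "Vector_Spaces.linear fscale fscale (inv g)"
    using g by (simp add: isometry_def fv.inj_linear_imp_inv_linear)
  show "inj (inv g)" using isometry_surj[OF g] by (rule surj_imp_inj_inv)
  fix x
  have "qform C (g (inv g x)) = qform C (inv g x)" using g by (simp add: isometry_def)
  then show "qform C (inv g x) = qform C x" using surj_f_inv_f[OF isometry_surj[OF g]] by simp
qed

lemma isometry_fdim_image: "isometry C g \<Longrightarrow> fdim (g ` S) = fdim S"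
  by (auto simp: isometry_def intro: fvp.dim_image_eq inj_on_subset)

lemma isometry_totally_singular_image:
  "isometry C g \<Longrightarrow> totally_singular C U \<Longrightarrow> totally_singular C (g ` U)"
  by (auto simp: isometry_def totally_singular_def intro: fvp.linear_subspace_image)

definition hyp_comb ::
  "(nat \<Rightarrow> 'n \<Rightarrow> 'a::field) \<Rightarrow> (nat \<Rightarrow> 'n \<Rightarrow> 'a) \<Rightarrow> (nat \<Rightarrow> 'a) \<Rightarrow> (nat \<Rightarrow> 'a) \<Rightarrow> nat \<Rightarrow> 'n \<Rightarrow> 'a" where
  "hyp_comb e f a b n = (\<Sum>i<n. fscale (a i) (e i)) + (\<Sum>i<n. fscale (b i) (f i))"

context quadratic_space
begin

lemma isometry_dp_image: "isometry C g \<Longrightarrow> U \<in> DP \<Longrightarrow> g ` U \<in> DP"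
  by (simp add: dp_vertices_def isometry_fdim_image isometry_totally_singular_image)

lemma isometry_dp_dist:
  assumes "isometry C g"
  shows "dp_dist (g ` U) (g ` V) = dp_dist U V"
proof -
  have "g ` U \<inter> g ` V = g ` (U \<inter> V)" using assms by (simp add: isometry_def image_Int)
  then show ?thesis using isometry_fdim_image[OF assms] by (simp add: dp_dist_def)
qed

lemma hyp_comb_polar:
  assumes h: "hyperbolic_pairs e f" and n: "n \<le> w" and j: "j < w"
  shows "Bp (hyp_comb e f a b n) (f j) = (if j < n then a j else 0)"
    "Bp (hyp_comb e f a b n) (e j) = (if j < n then b j else 0)"
proof -
  have "Bp (hyp_comb e f a b n) (f j) = (\<Sum>i<n. a i * Bp (e i) (f j)) + (\<Sum>i<n. b i * Bp (f i) (f j))"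
    by (simp add: hyp_comb_def polar_add_left polar_sum_left polar_scale_left)
  also have "(\<Sum>i<n. b i * Bp (f i) (f j)) = 0"
    using hyperbolic_pairsD(4)[OF h _ j] n by (intro sum.neutral) auto
  also have "(\<Sum>i<n. a i * Bp (e i) (f j)) = (\<Sum>i<n. if i = j then a i else 0)"
    using hyperbolic_pairsD(5)[OF h _ j] n by (intro sum.cong) auto
  finally show "Bp (hyp_comb e f a b n) (f j) = (if j < n then a j else 0)" by simp
  have "Bp (hyp_comb e f a b n) (e j) = (\<Sum>i<n. a i * Bp (e i) (e j)) + (\<Sum>i<n. b i * Bp (f i) (e j))"
    by (simp add: hyp_comb_def polar_add_left polar_sum_left polar_scale_left)
  also have "(\<Sum>i<n. a i * Bp (e i) (e j)) = 0"
    using hyperbolic_pairsD(3)[OF h _ j] n by (intro sum.neutral) auto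
  also have "(\<Sum>i<n. b i * Bp (f i) (e j)) = (\<Sum>i<n. if i = j then b i else 0)"
    using hyperbolic_pairsD(6)[OF h j] n by (intro sum.cong) auto
  finally show "Bp (hyp_comb e f a b n) (e j) = (if j < n then b j else 0)" by simp
qed

lemma hyp_comb_qform:
  assumes h: "hyperbolic_pairs e f"
  shows "n \<le> w \<Longrightarrow> Q (hyp_comb e f a b n) = (\<Sum>i<n. a i * b i)"
proof (induction n)
  case 0
  have "hyp_comb e f a b 0 = 0" by (simp add: hyp_comb_def)
  then show ?case by (simp only: qform_zero lessThan_0 sum.empty)
next
  case (Suc n)
  define t where "t = fscale (a n) (e n) + fscale (b n) (f n)"
  have n: "n < w" using Suc.prems by simp
  have "hyp_comb e f a b (Suc n) = hyp_comb e f a b n + t"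
    by (simp add: hyp_comb_def t_def algebra_simps)
  moreover have "Bp (hyp_comb e f a b n) t = 0"
    using hyp_comb_polar[OF h _ n, of n a b] n by (simp add: t_def polar_add_right polar_scale_right)
  moreover have "Q t = a n * b n"
    using hyperbolic_pairsD[OF h n n]
    by (simp add: t_def qform_add qform_scale polar_scale_left polar_scale_right)
  ultimately have "Q (hyp_comb e f a b (Suc n)) = Q (hyp_comb e f a b n) + a n * b n"
    by (simp only: qform_add add_0_right)
  then show ?case using Suc by simp
qed

lemma hyperbolic_pairs_span_UNIV:
  assumes h: "hyperbolic_pairs e f"
  shows "fv.span (e ` {..<w} \<union> f ` {..<w}) = UNIV"
proof -
  have "fdim (UNIV :: ('n \<Rightarrow> 'a) set) \<le> fdim (fv.span (e ` {..<w} \<union> f ` {..<w}))"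
    using hyperbolic_pairs_fdim_span[OF h] card_UNIV by simp
  then show ?thesis using fv.subspace_dim_equal[OF fv.subspace_span fv.subspace_UNIV subset_UNIV] by simp
qed

lemma hyp_comb_expansion:
  assumes h: "hyperbolic_pairs e f"
  shows "x = hyp_comb e f (\<lambda>i. Bp x (f i)) (\<lambda>i. Bp x (e i)) w"
proof -
  define d where "d = x - hyp_comb e f (\<lambda>i. Bp x (f i)) (\<lambda>i. Bp x (e i)) w"
  have "d \<in> perp C (e ` {..<w} \<union> f ` {..<w})"
    using hyp_comb_polar[OF h order_refl]
    by (auto simp: perp_def d_def polar_diff_right polar_sym[of C "e _"] polar_sym[of C "f _"])
  then have "d \<in> perp C UNIV" using perp_span hyperbolic_pairs_span_UNIV[OF h] by metis
  then show ?thesis using perp_UNIV[OF nondegenerate] by (simp add: d_def)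
qed

lemma hyperbolic_pairs_eqI:
  assumes h: "hyperbolic_pairs e f"
    and "\<And>i. i < w \<Longrightarrow> Bp x (e i) = Bp y (e i)" "\<And>i. i < w \<Longrightarrow> Bp x (f i) = Bp y (f i)"
  shows "x = y"
  using hyp_comb_expansion[OF h, of x] hyp_comb_expansion[OF h, of y] assms(2,3)
  by (simp add: hyp_comb_def)

definition hyp_transfer where
  "hyp_transfer e f e' f' x = hyp_comb e' f' (\<lambda>i. Bp x (f i)) (\<lambda>i. Bp x (e i)) w"

lemma hyp_transfer_polar:
  assumes "hyperbolic_pairs e' f'" "j < w"
  shows "Bp (hyp_transfer e f e' f' x) (e' j) = Bp x (e j)" "Bp (hyp_transfer e f e' f' x) (f' j) = Bp x (f j)"
  using hyp_comb_polar[OF assms(1) order_refl assms(2)] assms(2) by (simp_all add: hyp_transfer_def)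

lemma hyp_transfer_linear: "Vector_Spaces.linear fscale fscale (hyp_transfer e f e' f')"
  unfolding Vector_Spaces.linear_iff
proof (intro conjI allI)
  fix x y c
  show "hyp_transfer e f e' f' (x + y) = hyp_transfer e f e' f' x + hyp_transfer e f e' f' y"
    by (simp add: hyp_transfer_def hyp_comb_def polar_add_left fv.scale_left_distrib
        sum.distrib algebra_simps)
  show "hyp_transfer e f e' f' (fscale c x) = fscale c (hyp_transfer e f e' f' x)"
    by (simp add: hyp_transfer_def hyp_comb_def polar_scale_left fv.scale_right_distrib
        fv.scale_sum_right)
qed unfold_locales

lemma hyperbolic_pairs_isometry:
  assumes h: "hyperbolic_pairs e f" and h': "hyperbolic_pairs e' f'"
  shows "\<exists>g. isometry C g \<and> (\<forall>i<w. g (e i) = e' i \<and> g (f i) = f' i)"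
proof (intro exI conjI allI impI)
  let ?g = "hyp_transfer e f e' f'"
  have "hyp_transfer e' f' e f (?g x) = x" for x
    by (rule hyperbolic_pairs_eqI[OF h]) (simp_all add: hyp_transfer_polar[OF h] hyp_transfer_polar[OF h'])
  then have "inj ?g" by (metis injI)
  moreover have "Q (?g x) = Q x" for x
  proof -
    have "Q (?g x) = (\<Sum>i<w. Bp x (f i) * Bp x (e i))"
      unfolding hyp_transfer_def by (rule hyp_comb_qform[OF h' order_refl])
    also have "\<dots> = Q (hyp_comb e f (\<lambda>i. Bp x (f i)) (\<lambda>i. Bp x (e i)) w)"
      by (rule hyp_comb_qform[OF h order_refl, symmetric])
    also have "\<dots> = Q x" using hyp_comb_expansion[OF h, of x] by simp
    finally show ?thesis .
  qed
  ultimately show "isometry C ?g" by (simp add: isometry_def hyp_transfer_linear)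
  fix i assume i: "i < w"
  show "?g (e i) = e' i" "?g (f i) = f' i"
    by (rule hyperbolic_pairs_eqI[OF h'];
        simp add: hyp_transfer_polar[OF h'] hyperbolic_pairsD[OF h i] hyperbolic_pairsD[OF h' i]
          hyperbolic_pairsD[OF h _ i] hyperbolic_pairsD[OF h' _ i])+
qed

end

section \<open>The half dual polar graph\<close>

lemma walk_Cons_Cons: "walk V E (x # y # xs) \<longleftrightarrow> x \<in> V \<and> E x y \<and> walk V E (y # xs)"
proof -
  have "(\<forall>i. Suc i < length (x # y # xs) \<longrightarrow> E ((x # y # xs) ! i) ((x # y # xs) ! Suc i)) \<longleftrightarrow>
      (\<forall>i < Suc (length xs). E ((x # y # xs) ! i) ((x # y # xs) ! Suc i))"
    by simp
  also have "\<dots> \<longleftrightarrow> E x y \<and> (\<forall>i < length xs. E ((y # xs) ! i) ((y # xs) ! Suc i))"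
    by (simp only: All_less_Suc2) simp
  finally show ?thesis by (auto simp: walk_def)
qed

locale half_dual_polar_graph = quadratic_space +
  fixes U0 assumes U0: "U0 \<in> dp_vertices C w"
begin

abbreviation HV where "HV \<equiv> half_vertices C w U0"
abbreviation HE where "HE \<equiv> half_adj w"

lemma half_vertices_iff: "U \<in> HV \<longleftrightarrow> U \<in> DP \<and> even (dp_dist U U0)"
  by (simp add: half_vertices_def dp_dist_def)

lemma half_adj_iff: "U \<in> DP \<Longrightarrow> HE U V \<longleftrightarrow> dp_dist U V = 2"
  using dp_fdim_Int_le[of U V] by (auto simp: half_adj_def dp_dist_def)

lemma half_vertices_even_dist: "U \<in> HV \<Longrightarrow> V \<in> HV \<Longrightarrow> even (dp_dist U V)"
  using dp_dist_parity[of U V U0] U0 by (auto simp: half_vertices_iff dp_dist_sym[of V U0])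

lemma walk_dp_dist_le: "walk HV HE xs \<Longrightarrow> dp_dist (hd xs) (last xs) \<le> 2 * (length xs - 1)"
proof (induction xs rule: induct_list012)
  case (3 x y zs)
  then have x: "x \<in> HV" "HE x y" and yzs: "walk HV HE (y # zs)" by (simp_all add: walk_Cons_Cons)
  then have "y \<in> HV" "last (y # zs) \<in> HV" by (auto simp: walk_def)
  then have "dp_dist x (last (y # zs)) \<le> dp_dist x y + dp_dist y (last (y # zs))"
    using x(1) by (intro dp_dist_triangle) (auto simp: half_vertices_iff)
  moreover have "dp_dist x y = 2" using x half_adj_iff half_vertices_iff by blast
  ultimately show ?case using 3(2) yzs by simp
qed (auto simp: walk_def half_vertices_iff)

lemma half_step:
  assumes U: "U \<in> HV" and V: "V \<in> HV" and ne: "U \<noteq> V"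
  shows "\<exists>U2\<in>HV. dp_dist U U2 = 2 \<and> dp_dist U2 V + 2 = dp_dist U V"
proof -
  have UDP: "U \<in> DP" and VDP: "V \<in> DP" using U V by (auto simp: half_vertices_iff)
  obtain U1 where U1: "U1 \<in> DP" "dp_dist U U1 = 1" "dp_dist U1 V + 1 = dp_dist U V"
    using dp_dist_step[OF UDP VDP ne] by blast
  have "dp_dist U V \<noteq> 1" using half_vertices_even_dist[OF U V] by auto
  then have "U1 \<noteq> V" using U1(3) VDP by auto
  then obtain U2 where U2: "U2 \<in> DP" "dp_dist U1 U2 = 1" "dp_dist U2 V + 1 = dp_dist U1 V"
    using dp_dist_step[OF U1(1) VDP] by blast
  have "dp_dist U U2 \<le> dp_dist U U1 + dp_dist U1 U2" by (rule dp_dist_triangle[OF UDP U1(1) U2(1)])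
  moreover have "dp_dist U V \<le> dp_dist U U2 + dp_dist U2 V" by (rule dp_dist_triangle[OF UDP U2(1) VDP])
  ultimately have d2: "dp_dist U U2 = 2" using U1 U2 by linarith
  have "even (dp_dist U2 U + dp_dist U U0 + dp_dist U2 U0)" by (rule dp_dist_parity[OF U2(1) UDP U0])
  then have "U2 \<in> HV" using d2 U U2(1) by (simp add: half_vertices_iff dp_dist_sym[of U2 U])
  with d2 U1(3) U2(3) show ?thesis by auto
qed

lemma walk_half_exists:
  assumes "U \<in> HV" "V \<in> HV"
  shows "\<exists>xs. walk HV HE xs \<and> hd xs = U \<and> last xs = V \<and> length xs = Suc (dp_dist U V div 2)"
  using assms
proof (induction "dp_dist U V div 2" arbitrary: U)
  case 0
  then have "dp_dist U V = 0" using half_vertices_even_dist by fastforce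
  then have "U = V" using 0 dp_dist_eq_0_iff by (simp add: half_vertices_iff)
  then show ?case using 0 by (intro exI[of _ "[U]"]) (auto simp: walk_def)
next
  case (Suc n)
  then have "U \<noteq> V" using dp_dist_self by (auto simp: half_vertices_iff)
  then obtain U2 where U2: "U2 \<in> HV" "dp_dist U U2 = 2" "dp_dist U2 V + 2 = dp_dist U V"
    using half_step[OF Suc.prems] by blast
  have "n = dp_dist U2 V div 2" using Suc.hyps(2) U2(3) by presburger
  then obtain xs where xs: "walk HV HE xs" "hd xs = U2" "last xs = V" "length xs = Suc n"
    using Suc.hyps(1) U2(1) Suc.prems(2) by blast
  then obtain ys where ys: "xs = U2 # ys" by (cases xs) auto
  have "walk HV HE (U # xs)"
    using xs(1) Suc.prems(1) U2(2) half_adj_iff half_vertices_iff by (simp add: ys walk_Cons_Cons)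
  with xs Suc.hyps(2) show ?case by (intro exI[of _ "U # xs"]) (simp add: ys)
qed

lemma gdist_half:
  assumes "U \<in> HV" "V \<in> HV"
  shows "gdist HV HE U V = dp_dist U V div 2"
  unfolding gdist_def
proof (rule Least_equality)
  fix n assume "\<exists>xs. walk HV HE xs \<and> hd xs = U \<and> last xs = V \<and> length xs = Suc n"
  then show "dp_dist U V div 2 \<le> n" using walk_dp_dist_le by fastforce
qed (rule walk_half_exists[OF assms])

lemma geodesic_halfD:
  assumes g: "geodesic HV HE xs" and len: "length xs = Suc l"
  shows "\<forall>i\<le>l. xs ! i \<in> HV" "\<forall>i<l. dp_dist (xs ! i) (xs ! Suc i) = 2"
    "dp_dist (xs ! 0) (xs ! l) = 2 * l"
proof -
  have wk: "walk HV HE xs" and gd: "gdist HV HE (hd xs) (last xs) = l"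
    using g len by (auto simp: geodesic_def)
  show HV: "\<forall>i\<le>l. xs ! i \<in> HV" using wk len by (auto simp: walk_def)
  show "\<forall>i<l. dp_dist (xs ! i) (xs ! Suc i) = 2"
    using wk len HV half_adj_iff by (auto simp: walk_def half_vertices_iff)
  have "xs \<noteq> []" using len by auto
  then have "hd xs = xs ! 0" "last xs = xs ! l" using len by (simp_all add: hd_conv_nth last_conv_nth)
  then have "dp_dist (xs ! 0) (xs ! l) div 2 = l" using gd gdist_half HV by auto
  moreover have "even (dp_dist (xs ! 0) (xs ! l))" using HV half_vertices_even_dist by blast
  ultimately show "dp_dist (xs ! 0) (xs ! l) = 2 * l" by presburger
qed

lemma geodesic_half_lift:
  assumes g: "geodesic HV HE xs" and len: "length xs = Suc l"
  shows "\<exists>X. dp_geodesic X w \<and> (\<forall>i\<le>l. X (2 * i) = xs ! i)"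
proof -
  note xs = geodesic_halfD[OF g len]
  have xsDP: "xs ! i \<in> DP" if "i \<le> l" for i using xs(1) that by (simp add: half_vertices_iff)
  have "\<exists>M\<in>DP. dp_dist (xs ! i) M = 1 \<and> dp_dist M (xs ! Suc i) = 1" if "i < l" for i
  proof -
    have "xs ! i \<noteq> xs ! Suc i" using xs(2) that xsDP by fastforce
    then show ?thesis using dp_dist_step[OF xsDP xsDP, of i "Suc i"] xs(2) that by fastforce
  qed
  then obtain mid where mid: "\<And>i. i < l \<Longrightarrow> mid i \<in> DP \<and> dp_dist (xs ! i) (mid i) = 1 \<and> dp_dist (mid i) (xs ! Suc i) = 1"
    by metis
  define X where "X j = (if even j then xs ! (j div 2) else mid (j div 2))" for j
  have "dp_geodesic X (2 * l)"
  proof (rule dp_geodesicI)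
    show "\<forall>j\<le>2 * l. X j \<in> DP"
    proof (intro allI impI)
      fix j assume "j \<le> 2 * l"
      then show "X j \<in> DP" using xsDP mid[of "j div 2"] by (cases "even j") (auto simp: X_def elim!: oddE)
    qed
    show "\<forall>j<2 * l. dp_dist (X j) (X (Suc j)) \<le> 1"
    proof (intro allI impI)
      fix j assume j: "j < 2 * l"
      then have "j div 2 < l" by simp
      then show "dp_dist (X j) (X (Suc j)) \<le> 1"
        using mid[of "j div 2"] by (cases "even j") (auto simp: X_def elim!: oddE)
    qed
  qed (use xs(3) in \<open>simp add: X_def\<close>)
  moreover have "2 * l \<le> w" using xs(3) dp_dist_le[OF xsDP[OF le0], of "xs ! l"] by simp
  ultimately obtain Y where "dp_geodesic Y w" "\<forall>j\<le>2 * l. Y j = X j" using dp_geodesic_extend by blast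
  then show ?thesis by (intro exI[of _ Y]) (simp add: X_def)
qed

lemma isometry_half_vertices_image:
  assumes g: "isometry C g" and A: "A \<in> HV" "g ` A \<in> HV" and U: "U \<in> HV"
  shows "g ` U \<in> HV"
proof -
  have UDP: "U \<in> DP" and ADP: "A \<in> DP" using U A by (auto simp: half_vertices_iff)
  have gU: "g ` U \<in> DP" by (rule isometry_dp_image[OF g UDP])
  have "even (dp_dist (g ` U) (g ` A) + dp_dist (g ` A) U0 + dp_dist (g ` U) U0)"
    using dp_dist_parity[OF gU isometry_dp_image[OF g ADP] U0] .
  moreover have "even (dp_dist (g ` U) (g ` A))"
    using isometry_dp_dist[OF g] half_vertices_even_dist[OF U A(1)] by simp
  ultimately show ?thesis using A(2) gU by (simp add: half_vertices_iff)
qed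

lemma isometry_graph_aut:
  assumes g: "isometry C g" and A: "A \<in> HV" "g ` A \<in> HV"
  shows "graph_aut HV HE ((`) g)"
  unfolding graph_aut_def
proof (intro conjI ballI)
  have inj: "inj g" and surj: "surj g" using g isometry_surj by (auto simp: isometry_def)
  have "inv g ` U \<in> HV" if "U \<in> HV" for U
    using isometry_half_vertices_image[OF isometry_inv[OF g] A(2)] A(1) that by (simp add: image_inv_f_f[OF inj])
  then have "HV \<subseteq> (`) g ` HV" using image_f_inv_f[OF surj] by (metis image_eqI subsetI)
  moreover have "(`) g ` HV \<subseteq> HV" using isometry_half_vertices_image[OF g A] by blast
  moreover have "inj_on ((`) g) HV" using inj by (simp add: inj_on_def inj_image_eq_iff)
  ultimately show "bij_betw ((`) g) HV HV" by (simp add: bij_betw_def)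
  fix U V assume "U \<in> HV" "V \<in> HV"
  then show "HE (g ` U) (g ` V) \<longleftrightarrow> HE U V"
    using half_adj_iff isometry_dp_dist[OF g] isometry_dp_image[OF g] by (simp add: half_vertices_iff)
qed

lemma half_geodesics_isometry:
  assumes xs: "geodesic HV HE xs" and ys: "geodesic HV HE ys" and len: "length xs = length ys"
  shows "\<exists>g. isometry C g \<and> map ((`) g) xs = ys"
proof -
  obtain l where l: "length xs = Suc l" using xs by (cases xs) (auto simp: geodesic_def walk_def)
  obtain X where X: "dp_geodesic X w" "\<forall>i\<le>l. X (2 * i) = xs ! i"
    using geodesic_half_lift[OF xs l] by blast
  obtain Y where Y: "dp_geodesic Y w" "\<forall>i\<le>l. Y (2 * i) = ys ! i"
    using geodesic_half_lift[OF ys] l len by auto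
  obtain e f where ef: "hyperbolic_pairs e f" "\<forall>k\<le>w. X k = fv.span (e ` {k..<w} \<union> f ` {..<k})"
    using dp_geodesic_hyperbolic_basis[OF X(1)] by blast
  obtain e' f' where ef': "hyperbolic_pairs e' f'" "\<forall>k\<le>w. Y k = fv.span (e' ` {k..<w} \<union> f' ` {..<k})"
    using dp_geodesic_hyperbolic_basis[OF Y(1)] by blast
  obtain g where g: "isometry C g" "\<forall>i<w. g (e i) = e' i \<and> g (f i) = f' i"
    using hyperbolic_pairs_isometry[OF ef(1) ef'(1)] by blast
  have lin: "Vector_Spaces.linear fscale fscale g" using g(1) by (simp add: isometry_def)
  have gX: "g ` X k = Y k" if k: "k \<le> w" for k
  proof -
    have "g ` e ` {k..<w} = e' ` {k..<w}" "g ` f ` {..<k} = f' ` {..<k}"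
      unfolding image_image using g(2) k by (auto intro!: image_cong)
    then have "g ` (e ` {k..<w} \<union> f ` {..<k}) = e' ` {k..<w} \<union> f' ` {..<k}" by (simp add: image_Un)
    then show ?thesis using ef(2) ef'(2) k fvp.linear_span_image[OF lin, symmetric] by simp
  qed
  have "2 * l \<le> w"
    using geodesic_halfD(1,3)[OF xs l] dp_dist_le[of "xs ! 0" "xs ! l"] by (simp add: half_vertices_iff)
  then have "g ` (xs ! i) = ys ! i" if "i \<le> l" for i using gX[of "2 * i"] X(2) Y(2) that by simp
  then have "map ((`) g) xs = ys" using l len by (intro nth_equalityI) auto
  with g(1) show ?thesis by blast
qed

theorem half_dual_polar_geodesic_transitive: "geodesic_transitive HV HE"
  unfolding geodesic_transitive_def
proof (intro allI impI, elim conjE)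
  fix xs ys assume xs: "geodesic HV HE xs" and ys: "geodesic HV HE ys" and "length xs = length ys"
  then obtain g where g: "isometry C g" "map ((`) g) xs = ys" using half_geodesics_isometry by blast
  have "xs \<noteq> []" "hd xs \<in> HV" "hd ys \<in> HV" using xs ys by (auto simp: geodesic_def walk_def)
  moreover have "g ` hd xs = hd ys" using g(2) \<open>xs \<noteq> []\<close> by (auto simp: hd_map)
  ultimately have "graph_aut HV HE ((`) g)" using isometry_graph_aut[OF g(1)] by simp
  with g(2) show "\<exists>\<sigma>. graph_aut HV HE \<sigma> \<and> map \<sigma> xs = ys" by blast
qed

end

theorem corollary3p6:
  fixes C :: "'n::finite \<Rightarrow> 'n \<Rightarrow> 'a::{field,finite}"
    and w :: nat and U0 :: "('n \<Rightarrow> 'a) set"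
  assumes "w \<ge> 2"
    and "card (UNIV :: 'n set) = 2 * w"
    and "nondegenerate C"
    and "witt_index C = w"
    and "U0 \<in> dp_vertices C w"
  shows "geodesic_transitive (half_vertices C w U0) (half_adj w)"
proof -
  \<comment> \<open>\<open>w \<ge> 2\<close> is not needed, and the Witt index is already determined by \<open>U0\<close>\<close>
  interpret half_dual_polar_graph C w U0
    by unfold_locales (use assms in simp_all)
  show ?thesis by (rule half_dual_polar_geodesic_transitive)
qed

end
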